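(* Let $q\ge1$ and let $A=(a_{ijk})_{i,j\le n,k\le m}$ be a real array. Then $\mathbb{E}\varphi_A(E_n)\le C(q)\sqrt{W_A}$, where $C(q)$ depends only on $q$.
   Context: $E_n=(\mathcal E_1,\dots,\mathcal E_n)$ has i.i.d. standard symmetric exponential coordinates. $W_A=\big(\sum_k(\sum_{i,j}a_{ijk}^2)^{q/2}\big)^{1/q}$ and $\varphi_A(x)=\Big(\sum_k\Big(\sum_i\frac{(\sum_ja_{ijk}x_j)^4}{\sum_ja_{ijk}^2}\Big)^{q/2}\Big)^{1/(2q)}$ for $x\in\mathbb{R}^n$, terms with $\sum_ja_{ijk}^2=0$ being omitted. *)

theory Defs
  imports "HOL-Probability.Probability"
begin

definition sym_exp :: "real measure" where
  "sym_exp = density lborel (\<lambda>x. ennreal (exp (- \<bar>x\<bar>) / 2))"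

text \<open>Law of E_n = (E_1,...,E_n), i.i.d. coordinates indexed by {..<n}.\<close>
definition E_law :: "nat \<Rightarrow> (nat \<Rightarrow> real) measure" where
  "E_law n = PiM {..<n} (\<lambda>_. sym_exp)"

text \<open>Array a i j k with i,j < n, k < m.\<close>
definition W_A :: "real \<Rightarrow> nat \<Rightarrow> nat \<Rightarrow> (nat \<Rightarrow> nat \<Rightarrow> nat \<Rightarrow> real) \<Rightarrow> real" where
  "W_A q n m a = (\<Sum>k<m. (\<Sum>i<n. \<Sum>j<n. (a i j k)^2) powr (q/2)) powr (1/q)"

definition phi_A :: "real \<Rightarrow> nat \<Rightarrow> nat \<Rightarrow> (nat \<Rightarrow> nat \<Rightarrow> nat \<Rightarrow> real) \<Rightarrow> (nat \<Rightarrow> real) \<Rightarrow> real" where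
  "phi_A q n m a x = (\<Sum>k<m. (\<Sum>i\<in>{i. i < n \<and> (\<Sum>j<n. (a i j k)^2) \<noteq> 0}.
       (\<Sum>j<n. a i j k * x j)^4 / (\<Sum>j<n. (a i j k)^2)) powr (q/2)) powr (1/(2*q))"

end

theory Submission
  imports Defs
begin

text \<open>
  Let a_i be the rows of the k-th slice of A, S_k = sum_i |a_i|^2 and b_i = a_i / |a_i|. Then
  phi_A(x)^(2q) = sum_k Q_k(x)^(q/2) with Q_k(x) = sum_i <a_i,x>^4 / |a_i|^2, and Q_k / S_k is
  the convex combination of the <b_i,x>^4 with weights |a_i|^2 / S_k. For an integer N >= q/2,
  Jensen gives (Q_k/S_k)^(q/2) <= 1 + sum_i (|a_i|^2/S_k) <b_i,x>^(4N). The symmetric exponential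
  law has moment generating function 1/(1 - s^2), so E exp(<b,E_n>/2) <= e^(1/2) for unit b,
  and all moments of <b,E_n> are bounded independently of n. Hence
  E phi_A(E_n)^(2q) <= K sum_k S_k^(q/2) = K W_A^q with K depending only on q, and the
  concavity bound y^alpha <= B^alpha (1 + y/B) for alpha = 1/(2q) turns this into
  E phi_A(E_n) <= 2 K^alpha sqrt W_A.
\<close>

lemma sets_sym_exp [measurable_cong]: "sets sym_exp = sets borel"
  by (simp add: sym_exp_def)

lemma nn_integral_exp_neg_halfline:
  fixes c :: real
  assumes "0 < c"
  shows "(\<integral>\<^sup>+x. ennreal (exp (- (c * x))) * indicator {0..} x \<partial>lborel) = ennreal (1 / c)"
proof -
  have "indicator {0..} (x / c) = (indicator {0..} x :: ennreal)" for x
    using assms by (simp add: zero_le_divide_iff split: split_indicator)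
  then have "(\<integral>\<^sup>+x. ennreal (exp (- (c * x))) * indicator {0..} x \<partial>lborel)
      = ennreal (1 / c) * (\<integral>\<^sup>+x. ennreal (x ^ 0 * exp (- x)) * indicator {0..} x \<partial>lborel)"
    using assms by (subst nn_integral_real_affine[where c = "1 / c" and t = 0]) auto
  also have "\<dots> = ennreal (1 / c)"
    unfolding nn_intergal_power_times_exp_Ici by simp
  finally show ?thesis .
qed

lemma ennreal_half: "0 \<le> y \<Longrightarrow> ennreal (y / 2) = inverse 2 * ennreal y"
  by (metis divide_ennreal ennreal_numeral zero_less_numeral divide_ennreal_def mult.commute)

lemma sym_exp_density_mult_exp:
  fixes s x :: real
  assumes "x \<noteq> 0"
  shows "ennreal (exp (- \<bar>x\<bar>) / 2) * ennreal (exp (s * x))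
    = inverse 2 * (ennreal (exp (- ((1 - s) * x))) * indicator {0..} x
                   + ennreal (exp (- ((1 + s) * - x))) * indicator {0..} (- x))"
proof -
  have "ennreal (exp (- \<bar>x\<bar>) / 2) * ennreal (exp (s * x))
      = inverse 2 * ennreal (exp (- \<bar>x\<bar>) * exp (s * x))"
    by (simp add: ennreal_half ennreal_mult mult.assoc)
  also have "ennreal (exp (- \<bar>x\<bar>) * exp (s * x))
      = ennreal (exp (- ((1 - s) * x))) * indicator {0..} x
        + ennreal (exp (- ((1 + s) * - x))) * indicator {0..} (- x)"
    using assms by (cases "0 < x") (simp_all add: mult_exp_exp algebra_simps)
  finally show ?thesis .
qed

lemma nn_integral_sym_exp_exp:
  fixes s :: real
  assumes "\<bar>s\<bar> < 1"
  shows "(\<integral>\<^sup>+x. ennreal (exp (s * x)) \<partial>sym_exp) = ennreal (1 / (1 - s\<^sup>2))"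
proof -
  have "(\<integral>\<^sup>+x. ennreal (exp (s * x)) \<partial>sym_exp)
      = (\<integral>\<^sup>+x. ennreal (exp (- \<bar>x\<bar>) / 2) * ennreal (exp (s * x)) \<partial>lborel)"
    unfolding sym_exp_def by (subst nn_integral_density) auto
  also have "\<dots> = (\<integral>\<^sup>+x. inverse 2 * (ennreal (exp (- ((1 - s) * x))) * indicator {0..} x
                     + ennreal (exp (- ((1 + s) * - x))) * indicator {0..} (- x)) \<partial>lborel)"
    by (rule nn_integral_cong_AE, rule eventually_mono[OF AE_lborel_singleton[of 0]],
        rule sym_exp_density_mult_exp)
  also have "\<dots> = inverse 2 * ((\<integral>\<^sup>+x. ennreal (exp (- ((1 - s) * x))) * indicator {0..} x \<partial>lborel)
                     + (\<integral>\<^sup>+x. ennreal (exp (- ((1 + s) * - x))) * indicator {0..} (- x) \<partial>lborel))"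
    by (subst nn_integral_cmult) (auto simp: nn_integral_add)
  also have "(\<integral>\<^sup>+x. ennreal (exp (- ((1 + s) * - x))) * indicator {0..} (- x) \<partial>lborel)
      = (\<integral>\<^sup>+x. ennreal (exp (- ((1 + s) * x))) * indicator {0..} x \<partial>lborel)"
    by (subst nn_integral_real_affine[where c = "-1" and t = 0]) auto
  also have "(\<integral>\<^sup>+x. ennreal (exp (- ((1 - s) * x))) * indicator {0..} x \<partial>lborel)
      = ennreal (1 / (1 - s))"
    using assms by (intro nn_integral_exp_neg_halfline) auto
  also have "(\<integral>\<^sup>+x. ennreal (exp (- ((1 + s) * x))) * indicator {0..} x \<partial>lborel)
      = ennreal (1 / (1 + s))"
    using assms by (intro nn_integral_exp_neg_halfline) auto
  also have "inverse 2 * (ennreal (1 / (1 - s)) + ennreal (1 / (1 + s)))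
      = ennreal ((1 / (1 - s) + 1 / (1 + s)) / 2)"
    using assms by (simp add: ennreal_half ennreal_plus[symmetric] del: ennreal_plus)
  also have "(1 / (1 - s) + 1 / (1 + s)) / 2 = 1 / (1 - s\<^sup>2)"
    using assms abs_square_less_1[of s] by (simp add: field_simps power2_eq_square)
  finally show ?thesis .
qed

lemma prob_space_sym_exp: "prob_space sym_exp"
proof
  have "emeasure sym_exp (space sym_exp) = (\<integral>\<^sup>+x. ennreal (exp (0 * x)) \<partial>sym_exp)"
    by simp
  then show "emeasure sym_exp (space sym_exp) = 1"
    using nn_integral_sym_exp_exp[of 0] by simp
qed

lemma prob_space_E_law: "prob_space (E_law n)"
  unfolding E_law_def by (intro prob_space_PiM prob_space_sym_exp)

lemma borel_measurable_E_law_linear [measurable]: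
  "(\<lambda>x. \<Sum>j<n. b j * x j) \<in> borel_measurable (E_law n)"
  unfolding E_law_def by measurable

lemma one_div_one_minus_le_exp:
  fixes u :: real
  assumes "0 \<le> u" "u \<le> 1/2"
  shows "1 / (1 - u) \<le> exp (2 * u)"
proof -
  have "1 \<le> (1 - u) * (1 + 2 * u)"
    using assms mult_left_mono[of "2 * u" 1 u] by (simp add: algebra_simps)
  also have "\<dots> \<le> (1 - u) * exp (2 * u)"
    using assms by (intro mult_left_mono) (auto simp: exp_ge_add_one_self)
  finally show ?thesis
    using assms by (simp add: field_simps)
qed

lemma nn_integral_E_law_exp_linear:
  fixes b :: "nat \<Rightarrow> real"
  assumes "\<And>j. j < n \<Longrightarrow> \<bar>b j\<bar> \<le> 1/2"
  shows "(\<integral>\<^sup>+x. ennreal (exp (\<Sum>j<n. b j * x j)) \<partial>E_law n) \<le> ennreal (exp (2 * (\<Sum>j<n. (b j)\<^sup>2)))"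
proof -
  interpret product_sigma_finite "\<lambda>_::nat. sym_exp"
    by (simp add: product_sigma_finite_def prob_space_imp_sigma_finite prob_space_sym_exp)
  have "(\<integral>\<^sup>+x. ennreal (exp (\<Sum>j<n. b j * x j)) \<partial>E_law n)
      = (\<integral>\<^sup>+x. (\<Prod>j<n. ennreal (exp (b j * x j))) \<partial>E_law n)"
    by (simp add: exp_sum prod_ennreal)
  also have "\<dots> = (\<Prod>j<n. \<integral>\<^sup>+y. ennreal (exp (b j * y)) \<partial>sym_exp)"
    unfolding E_law_def by (rule product_nn_integral_prod) auto
  also have "\<dots> \<le> (\<Prod>j<n. ennreal (exp (2 * (b j)\<^sup>2)))"
  proof (rule prod_mono_ennreal)
    fix j assume "j \<in> {..<n}"
    then have "\<bar>b j\<bar> \<le> 1/2" "(b j)\<^sup>2 \<le> 1/4"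
      using assms abs_le_square_iff[of "b j" "1/2"] by (auto simp: power2_eq_square)
    then show "(\<integral>\<^sup>+y. ennreal (exp (b j * y)) \<partial>sym_exp) \<le> ennreal (exp (2 * (b j)\<^sup>2))"
      by (simp add: nn_integral_sym_exp_exp one_div_one_minus_le_exp)
  qed
  also have "\<dots> = ennreal (exp (2 * (\<Sum>j<n. (b j)\<^sup>2)))"
    by (simp add: prod_ennreal exp_sum sum_distrib_left)
  finally show ?thesis .
qed

lemma power_div_fact_le_exp:
  fixes z :: real
  assumes "0 \<le> z"
  shows "z ^ K / fact K \<le> exp z"
proof -
  have "(\<Sum>n\<in>{K}. z ^ n /\<^sub>R fact n) \<le> (\<Sum>n. z ^ n /\<^sub>R fact n)"
    using assms exp_converges[of z] by (intro sum_le_suminf) (auto simp: sums_iff)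
  also have "\<dots> = exp z"
    using exp_converges[of z] by (simp add: sums_iff)
  finally show ?thesis
    by (simp add: divide_inverse_commute)
qed

lemma power_le_exp_half:
  fixes y :: real
  shows "y ^ K \<le> 2 ^ K * fact K * (exp (y / 2) + exp (- (y / 2)))"
proof -
  have "y ^ K \<le> \<bar>y\<bar> ^ K"
    by (metis abs_ge_self power_abs)
  also have "\<dots> = 2 ^ K * (\<bar>y\<bar> / 2) ^ K"
    by (simp add: power_divide)
  also have "(\<bar>y\<bar> / 2) ^ K \<le> fact K * exp (\<bar>y\<bar> / 2)"
    using power_div_fact_le_exp[of "\<bar>y\<bar> / 2" K] by (simp add: field_simps)
  also have "exp (\<bar>y\<bar> / 2) \<le> exp (y / 2) + exp (- (y / 2))"
    by (cases "y \<ge> 0") (auto simp: add_increasing add_increasing2)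
  finally show ?thesis
    by (simp add: mult_left_mono mult.assoc)
qed

definition linear_moment_bound :: "nat \<Rightarrow> real" where
  "linear_moment_bound K = 2 ^ K * fact K * (2 * exp (1/2))"

lemma linear_moment_bound_nonneg: "0 \<le> linear_moment_bound K"
  by (simp add: linear_moment_bound_def)

lemma nn_integral_E_law_exp_scaled_linear:
  fixes b :: "nat \<Rightarrow> real"
  assumes b: "(\<Sum>j<n. (b j)\<^sup>2) \<le> 1" and c: "\<bar>c\<bar> \<le> 1/2"
  shows "(\<integral>\<^sup>+x. ennreal (exp (c * (\<Sum>j<n. b j * x j))) \<partial>E_law n) \<le> ennreal (exp (1/2))"
proof -
  have c2: "c\<^sup>2 \<le> 1/4"
    using c abs_le_square_iff[of c "1/2"] by (simp add: power_divide)
  have "\<bar>c * b j\<bar> \<le> 1/2" if "j < n" for j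
  proof -
    have "(b j)\<^sup>2 \<le> 1"
      using that b member_le_sum[of j "{..<n}" "\<lambda>j. (b j)\<^sup>2"] by auto
    then have "(c * b j)\<^sup>2 \<le> 1/4 * 1"
      unfolding power_mult_distrib using c2 by (intro mult_mono) auto
    then show ?thesis
      using abs_le_square_iff[of "c * b j" "1/2"] by (simp add: power_divide)
  qed
  then have "(\<integral>\<^sup>+x. ennreal (exp (\<Sum>j<n. (c * b j) * x j)) \<partial>E_law n)
      \<le> ennreal (exp (2 * (\<Sum>j<n. (c * b j)\<^sup>2)))"
    by (rule nn_integral_E_law_exp_linear)
  also have "2 * (\<Sum>j<n. (c * b j)\<^sup>2) \<le> 2 * (1/4 * 1)"
    unfolding power_mult_distrib sum_distrib_left[symmetric] using b c2
    by (intro mult_left_mono mult_mono) (auto simp: sum_nonneg)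
  finally show ?thesis
    by (simp add: sum_distrib_left mult.assoc)
qed

lemma nn_integral_E_law_linear_power:
  fixes b :: "nat \<Rightarrow> real"
  assumes "(\<Sum>j<n. (b j)\<^sup>2) \<le> 1"
  shows "(\<integral>\<^sup>+x. ennreal ((\<Sum>j<n. b j * x j) ^ K) \<partial>E_law n) \<le> ennreal (linear_moment_bound K)"
proof -
  let ?y = "\<lambda>x. \<Sum>j<n. b j * x j"
  have "(\<integral>\<^sup>+x. ennreal (?y x ^ K) \<partial>E_law n)
      \<le> (\<integral>\<^sup>+x. ennreal (2 ^ K * fact K)
            * (ennreal (exp (1/2 * ?y x)) + ennreal (exp (- 1/2 * ?y x))) \<partial>E_law n)"
    using power_le_exp_half[of "?y x" K for x]
    by (intro nn_integral_mono)
      (simp add: ennreal_mult''[symmetric] ennreal_plus[symmetric] del: ennreal_plus)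
  also have "\<dots> = ennreal (2 ^ K * fact K) * ((\<integral>\<^sup>+x. ennreal (exp (1/2 * ?y x)) \<partial>E_law n)
      + (\<integral>\<^sup>+x. ennreal (exp (- 1/2 * ?y x)) \<partial>E_law n))"
    by (subst nn_integral_cmult) (auto simp: nn_integral_add)
  also have "\<dots> \<le> ennreal (2 ^ K * fact K) * (ennreal (exp (1/2)) + ennreal (exp (1/2)))"
    using assms by (intro mult_left_mono add_mono nn_integral_E_law_exp_scaled_linear) auto
  also have "\<dots> = ennreal (linear_moment_bound K)"
    by (simp add: linear_moment_bound_def ennreal_mult''[symmetric] ennreal_plus[symmetric]
        del: ennreal_plus)
  finally show ?thesis .
qed

lemma powr_le_one_plus_power:
  fixes t a :: real
  assumes "0 \<le> t" "0 < a" "a \<le> real N"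
  shows "t powr a \<le> 1 + t ^ N"
proof (cases "t \<le> 1")
  case True
  then have "t powr a \<le> 1"
    using assms by (intro powr_le1) auto
  then show ?thesis
    using assms by (simp add: add_increasing2)
next
  case False
  then have "t powr a \<le> t powr real N"
    using assms by (intro powr_mono) auto
  also have "\<dots> = t ^ N"
    using False by (simp add: powr_realpow)
  finally show ?thesis
    by simp
qed

lemma convex_power_nonneg: "convex_on {0::real..} (\<lambda>x. x ^ N)"
proof (cases "even N")
  case True
  then show ?thesis
    using convex_on_subset[OF convex_power_even[OF True]] by auto
next
  case False
  then show ?thesis
    using convex_power_odd[of N] by simp
qed

lemma nn_integral_convex_combination_powr_le:
  fixes w :: "'i \<Rightarrow> real" and Z :: "'i \<Rightarrow> 'a \<Rightarrow> real"
  assumes M: "subprob_space M" and I: "finite I"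
    and w: "(\<Sum>i\<in>I. w i) = 1" "\<And>i. i \<in> I \<Longrightarrow> 0 \<le> w i"
    and Z: "\<And>i. i \<in> I \<Longrightarrow> Z i \<in> borel_measurable M" "\<And>i x. i \<in> I \<Longrightarrow> 0 \<le> Z i x"
    and p: "0 < p" "p \<le> real N"
    and moment: "\<And>i. i \<in> I \<Longrightarrow> (\<integral>\<^sup>+x. ennreal (Z i x ^ N) \<partial>M) \<le> ennreal K" "0 \<le> K"
  shows "(\<integral>\<^sup>+x. ennreal ((\<Sum>i\<in>I. w i * Z i x) powr p) \<partial>M) \<le> ennreal (1 + K)"
proof -
  interpret subprob_space M by (rule M)
  have "I \<noteq> {}"
    using w by auto
  have pointwise: "(\<Sum>i\<in>I. w i * Z i x) powr p \<le> 1 + (\<Sum>i\<in>I. w i * Z i x ^ N)" for x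
  proof -
    have "(\<Sum>i\<in>I. w i * Z i x) powr p \<le> 1 + (\<Sum>i\<in>I. w i * Z i x) ^ N"
      using p w Z by (intro powr_le_one_plus_power sum_nonneg mult_nonneg_nonneg) auto
    also have "(\<Sum>i\<in>I. w i * Z i x) ^ N \<le> (\<Sum>i\<in>I. w i * Z i x ^ N)"
      using convex_on_sum[OF I \<open>I \<noteq> {}\<close> convex_power_nonneg w(1), of "\<lambda>i. Z i x"] w Z by simp
    finally show ?thesis
      by simp
  qed
  have "(\<integral>\<^sup>+x. ennreal ((\<Sum>i\<in>I. w i * Z i x) powr p) \<partial>M)
      \<le> (\<integral>\<^sup>+x. 1 + (\<Sum>i\<in>I. ennreal (w i) * ennreal (Z i x ^ N)) \<partial>M)"
    using w Z by (intro nn_integral_mono order.trans[OF ennreal_leI[OF pointwise]])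
      (simp add: ennreal_plus sum_ennreal[symmetric] ennreal_mult'' sum_nonneg del: sum_ennreal)
  also have "\<dots> = emeasure M (space M) + (\<Sum>i\<in>I. ennreal (w i) * (\<integral>\<^sup>+x. ennreal (Z i x ^ N) \<partial>M))"
    using Z by (simp add: nn_integral_add nn_integral_sum nn_integral_cmult)
  also have "\<dots> \<le> 1 + (\<Sum>i\<in>I. ennreal (w i) * ennreal K)"
    using moment by (intro add_mono emeasure_space_le_1 sum_mono mult_left_mono) auto
  also have "\<dots> = ennreal (1 + K)"
    using w moment by (simp add: ennreal_mult''[symmetric] sum_ennreal sum_distrib_right[symmetric])
  finally show ?thesis .
qed

lemma nn_integral_powr_le:
  fixes f :: "'a \<Rightarrow> real"
  assumes M: "subprob_space M"
    and f: "f \<in> borel_measurable M" "\<And>x. 0 \<le> f x"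
    and \<alpha>: "0 < \<alpha>" "\<alpha> \<le> 1"
    and B: "(\<integral>\<^sup>+x. ennreal (f x) \<partial>M) \<le> ennreal B"
  shows "(\<integral>\<^sup>+x. ennreal (f x powr \<alpha>) \<partial>M) \<le> ennreal (2 * B powr \<alpha>)"
proof (cases "0 < B")
  case False
  then have "(\<integral>\<^sup>+x. ennreal (f x) \<partial>M) = 0"
    using B ennreal_neg[of B] False by simp
  then have "AE x in M. f x = 0"
    using f by (simp add: nn_integral_0_iff_AE)
  then have "(\<integral>\<^sup>+x. ennreal (f x powr \<alpha>) \<partial>M) = (\<integral>\<^sup>+x. 0 \<partial>M)"
    by (intro nn_integral_cong_AE) (auto elim!: eventually_mono)
  then show ?thesis
    by simp
next
  case True
  interpret subprob_space M by (rule M)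
  have pointwise: "f x powr \<alpha> \<le> B powr \<alpha> + B powr \<alpha> / B * f x" for x
  proof -
    have "f x powr \<alpha> = B powr \<alpha> * (f x / B) powr \<alpha>"
      using True f by (simp add: powr_divide)
    also have "(f x / B) powr \<alpha> \<le> 1 + (f x / B) ^ 1"
      using True f \<alpha> by (intro powr_le_one_plus_power) auto
    finally show ?thesis
      using True by (simp add: algebra_simps mult_left_mono)
  qed
  have "(\<integral>\<^sup>+x. ennreal (f x powr \<alpha>) \<partial>M)
      \<le> (\<integral>\<^sup>+x. ennreal (B powr \<alpha>) + ennreal (B powr \<alpha> / B) * ennreal (f x) \<partial>M)"
    using True f by (intro nn_integral_mono order.trans[OF ennreal_leI[OF pointwise]])
      (simp add: ennreal_plus ennreal_mult''[symmetric])
  also have "\<dots> = ennreal (B powr \<alpha>) * emeasure M (space M)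
      + ennreal (B powr \<alpha> / B) * (\<integral>\<^sup>+x. ennreal (f x) \<partial>M)"
    using f by (simp add: nn_integral_add nn_integral_cmult)
  also have "\<dots> \<le> ennreal (B powr \<alpha>) * 1 + ennreal (B powr \<alpha> / B) * ennreal B"
    using B by (intro add_mono mult_left_mono emeasure_space_le_1) auto
  also have "\<dots> = ennreal (2 * B powr \<alpha>)"
    using True by (simp add: ennreal_mult''[symmetric] ennreal_plus[symmetric] del: ennreal_plus)
  finally show ?thesis .
qed

definition quartic_form :: "nat \<Rightarrow> (nat \<Rightarrow> nat \<Rightarrow> real) \<Rightarrow> (nat \<Rightarrow> real) \<Rightarrow> real" where
  "quartic_form n c x = (\<Sum>i\<in>{i. i < n \<and> (\<Sum>j<n. (c i j)\<^sup>2) \<noteq> 0}.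
     (\<Sum>j<n. c i j * x j) ^ 4 / (\<Sum>j<n. (c i j)\<^sup>2))"

definition frobenius_sq :: "nat \<Rightarrow> (nat \<Rightarrow> nat \<Rightarrow> real) \<Rightarrow> real" where
  "frobenius_sq n c = (\<Sum>i<n. \<Sum>j<n. (c i j)\<^sup>2)"

lemma frobenius_sq_nonneg: "0 \<le> frobenius_sq n c"
  unfolding frobenius_sq_def by (intro sum_nonneg) auto

lemma borel_measurable_quartic_form [measurable]: "quartic_form n c \<in> borel_measurable (E_law n)"
  unfolding quartic_form_def[abs_def] by measurable

lemma quartic_form_eq_0: "frobenius_sq n c = 0 \<Longrightarrow> quartic_form n c x = 0"
  unfolding quartic_form_def frobenius_sq_def
  by (simp add: sum_nonneg_eq_0_iff sum_nonneg)

lemma power4_div_eq_normalized: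
  fixes r x :: "nat \<Rightarrow> real"
  assumes "0 < s"
  shows "(\<Sum>j<n. r j * x j) ^ 4 / s = s * (\<Sum>j<n. r j / sqrt s * x j) ^ 4"
proof -
  have "(\<Sum>j<n. r j * x j) = sqrt s * (\<Sum>j<n. r j / sqrt s * x j)"
    using assms by (simp add: sum_distrib_left)
  moreover have "sqrt s ^ 4 = (sqrt s ^ 2) ^ 2"
    by (simp flip: power_mult)
  ultimately show ?thesis
    using assms by (simp add: power_mult_distrib power2_eq_square)
qed

lemma nn_integral_quartic_form_powr_le:
  fixes c :: "nat \<Rightarrow> nat \<Rightarrow> real"
  assumes p: "0 < p" "p \<le> real N"
  shows "(\<integral>\<^sup>+x. ennreal (quartic_form n c x powr p) \<partial>E_law n)
    \<le> ennreal ((1 + linear_moment_bound (4 * N)) * frobenius_sq n c powr p)"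
proof (cases "frobenius_sq n c = 0")
  case True
  then show ?thesis
    by (simp add: quartic_form_eq_0)
next
  case False
  define K where "K = linear_moment_bound (4 * N)"
  define S where "S = frobenius_sq n c"
  define s where "s i = (\<Sum>j<n. (c i j)\<^sup>2)" for i
  define I where "I = {i. i < n \<and> s i \<noteq> 0}"
  define b where "b i j = c i j / sqrt (s i)" for i j
  have "finite I"
    unfolding I_def by auto
  have s_nonneg: "0 \<le> s i" and s_pos: "i \<in> I \<Longrightarrow> 0 < s i" for i
    unfolding s_def I_def by (auto simp: sum_nonneg order_less_le)
  have S_eq: "S = (\<Sum>i\<in>I. s i)"
    unfolding S_def frobenius_sq_def s_def[symmetric] I_def by (rule sum.mono_neutral_right) auto
  have "0 < S"
    using False frobenius_sq_nonneg[of n c] by (simp add: S_def)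
  have b_norm: "(\<Sum>j<n. (b i j)\<^sup>2) = 1" if "i \<in> I" for i
    using s_pos[OF that] unfolding b_def
    by (simp add: power_divide sum_divide_distrib[symmetric] s_def)
  have rescale: "quartic_form n c x = S * (\<Sum>i\<in>I. (s i / S) * (\<Sum>j<n. b i j * x j) ^ 4)" for x
    unfolding quartic_form_def s_def[symmetric] I_def[symmetric] sum_distrib_left b_def
    using \<open>0 < S\<close> s_pos by (intro sum.cong) (auto simp: power4_div_eq_normalized)
  have "(\<integral>\<^sup>+x. ennreal (quartic_form n c x powr p) \<partial>E_law n)
      = ennreal (S powr p)
        * (\<integral>\<^sup>+x. ennreal ((\<Sum>i\<in>I. (s i / S) * (\<Sum>j<n. b i j * x j) ^ 4) powr p) \<partial>E_law n)"
    unfolding rescale powr_mult by (subst nn_integral_cmult[symmetric]) (auto simp: ennreal_mult'')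
  also have "\<dots> \<le> ennreal (S powr p) * ennreal (1 + K)"
  proof (intro mult_left_mono nn_integral_convex_combination_powr_le[OF _ \<open>finite I\<close> _ _ _ _ p]
      prob_space_imp_subprob_space[OF prob_space_E_law])
    show "(\<integral>\<^sup>+x. ennreal (((\<Sum>j<n. b i j * x j) ^ 4) ^ N) \<partial>E_law n) \<le> ennreal K" if "i \<in> I" for i
      using nn_integral_E_law_linear_power[OF b_norm[OF that, THEN eq_refl], of "4 * N"]
      by (simp add: K_def power_mult)
    show "(\<Sum>i\<in>I. s i / S) = 1"
      using \<open>0 < S\<close> by (simp add: S_eq sum_divide_distrib[symmetric])
  qed (use \<open>0 < S\<close> s_nonneg in \<open>auto simp: K_def linear_moment_bound_nonneg zero_le_even_power\<close>)
  also have "\<dots> = ennreal ((1 + K) * S powr p)"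
    by (subst ennreal_mult''[symmetric])
      (simp_all add: K_def linear_moment_bound_nonneg mult.commute)
  finally show ?thesis
    unfolding S_def K_def .
qed

lemma nn_integral_sum_quartic_form_powr_le:
  fixes c :: "nat \<Rightarrow> nat \<Rightarrow> nat \<Rightarrow> real"
  assumes "0 < p" "p \<le> real N"
  shows "(\<integral>\<^sup>+x. ennreal (\<Sum>k<m. quartic_form n (c k) x powr p) \<partial>E_law n)
    \<le> ennreal ((1 + linear_moment_bound (4 * N)) * (\<Sum>k<m. frobenius_sq n (c k) powr p))"
proof -
  have "(\<integral>\<^sup>+x. ennreal (\<Sum>k<m. quartic_form n (c k) x powr p) \<partial>E_law n)
      = (\<Sum>k<m. \<integral>\<^sup>+x. ennreal (quartic_form n (c k) x powr p) \<partial>E_law n)"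
    by (simp add: sum_ennreal[symmetric] nn_integral_sum del: sum_ennreal)
  also have "\<dots> \<le> (\<Sum>k<m. ennreal ((1 + linear_moment_bound (4 * N)) * frobenius_sq n (c k) powr p))"
    using assms by (intro sum_mono nn_integral_quartic_form_powr_le)
  also have "\<dots> = ennreal ((1 + linear_moment_bound (4 * N)) * (\<Sum>k<m. frobenius_sq n (c k) powr p))"
    by (simp add: sum_ennreal sum_distrib_left linear_moment_bound_nonneg)
  finally show ?thesis .
qed

theorem lemma5p2:
  fixes q :: real
  assumes "q \<ge> 1"
  shows "\<exists>C. \<forall>n m (a :: nat \<Rightarrow> nat \<Rightarrow> nat \<Rightarrow> real).
           (\<integral>\<^sup>+ x. ennreal (phi_A q n m a x) \<partial>(E_law n)) \<le> ennreal (C * sqrt (W_A q n m a))"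
proof -
  define N where "N = nat \<lceil>q / 2\<rceil>"
  define K where "K = 1 + linear_moment_bound (4 * N)"
  have N: "0 < q / 2" "q / 2 \<le> real N"
    using assms by (auto simp: N_def)
  show ?thesis
  proof (intro exI[of _ "2 * K powr (1 / (2 * q))"] allI)
    fix n m :: nat and a :: "nat \<Rightarrow> nat \<Rightarrow> nat \<Rightarrow> real"
    define Q where "Q x = (\<Sum>k<m. quartic_form n (\<lambda>i j. a i j k) x powr (q / 2))" for x
    define X where "X = (\<Sum>k<m. frobenius_sq n (\<lambda>i j. a i j k) powr (q / 2))"
    have "phi_A q n m a x = Q x powr (1 / (2 * q))" for x
      unfolding phi_A_def Q_def quartic_form_def ..
    moreover have "sqrt (W_A q n m a) = X powr (1 / (2 * q))"
      unfolding W_A_def X_def frobenius_sq_def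
      by (simp add: powr_half_sqrt_powr[symmetric] powr_powr sum_nonneg mult.commute[of q 2])
    moreover have "(\<integral>\<^sup>+x. ennreal (Q x powr (1 / (2 * q))) \<partial>E_law n)
        \<le> ennreal (2 * (K * X) powr (1 / (2 * q)))"
      using assms nn_integral_sum_quartic_form_powr_le[OF N,
          where c = "\<lambda>k i j. a i j k" and m = m and n = n]
      unfolding Q_def K_def X_def
      by (intro nn_integral_powr_le prob_space_imp_subprob_space prob_space_E_law)
        (auto simp: sum_nonneg)
    ultimately show "(\<integral>\<^sup>+ x. ennreal (phi_A q n m a x) \<partial>(E_law n))
        \<le> ennreal (2 * K powr (1 / (2 * q)) * sqrt (W_A q n m a))"
      by (simp add: powr_mult mult.assoc)
  qed
qed

end
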